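(* Let $k,I>0$ and $\alpha_2>\alpha_1\ge0$ with $\alpha_1\notin\mathbb{N}$, $\alpha_2\in\mathbb{N}$ and $\lceil\alpha_1\rceil+1\le\alpha_2$. Let $u_0^{(i)}\in\mathbb{R}$, $i=0,\dots,\alpha_2-1$, be given, and let $f:[0,I]\times\mathbb{R}\to\mathbb{R}$ be continuous. Define $$G=\Big\{(t,v):t\in[0,I],\ |v|\le\frac{I^{\lceil\alpha_1\rceil-\alpha_1}}{\Gamma(\lceil\alpha_1\rceil-\alpha_1+1)}\Big(k+\sum_{i=0}^{\alpha_2-\lceil\alpha_1\rceil-1}\frac{I^i}{i!}\big|u_0^{(i+\lceil\alpha_1\rceil)}\big|\Big)\Big\}$$ and $M:=\sup_{(t,v)\in G}|f(t,v)|$. Set $h:=I$ if $M=0$, and otherwise $$h:=\min\Big\{I,\Big(\frac{k\,\Gamma(\alpha_2-\lceil\alpha_1\rceil+1)}{M}\Big)^{\frac{1}{\alpha_2-\lceil\alpha_1\rceil}}\Big\}.$$ Then the initial value problem $$D^{\alpha_2}u(t)=f\big(t,D^{\alpha_1}u(t)\big),\qquad u^{(i)}(0)=u_0^{(i)},\ i=0,1,\dots,\alpha_2-1,$$ has at least one solution $u\in C^{\alpha_2}[0,h]$ on $[0,h]$.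
   Context: $\lceil\cdot\rceil$ is the ceiling function and $\mathbb{N}=\{1,2,\dots\}$. For $\delta>0$ the Riemann–Liouville integral is $J^\delta u(t)=\frac{1}{\Gamma(\delta)}\int_0^t(t-s)^{\delta-1}u(s)\,ds$, and $J^0$ is the identity. For $\beta\ge0$ the Caputo derivative is $D^\beta u=J^{\lceil\beta\rceil-\beta}u^{(\lceil\beta\rceil)}$ (so $D^{\alpha_2}u=u^{(\alpha_2)}$ for integer $\alpha_2$). A solution on $[0,h]$ is a function satisfying the differential equation for all $t\in[0,h]$ together with the initial conditions. *)

theory Defs
  imports "HOL-Analysis.Analysis"
begin

definition RL_int :: "real \<Rightarrow> (real \<Rightarrow> real) \<Rightarrow> real \<Rightarrow> real" where
  "RL_int \<delta> g t =
     (if \<delta> = 0 then g t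
      else integral {0..t} (\<lambda>s. (t - s) powr (\<delta> - 1) * g s) / Gamma \<delta>)"

text \<open>Caputo derivative D^beta u = J^(ceil beta - beta) u^(ceil beta), where the
  function u is given together with its derivatives: U j is the j-th derivative of u = U 0.\<close>
definition caputo :: "real \<Rightarrow> (nat \<Rightarrow> real \<Rightarrow> real) \<Rightarrow> real \<Rightarrow> real" where
  "caputo \<beta> U t = RL_int (of_int \<lceil>\<beta>\<rceil> - \<beta>) (U (nat \<lceil>\<beta>\<rceil>)) t"

definition Cn_on :: "nat \<Rightarrow> real \<Rightarrow> (nat \<Rightarrow> real \<Rightarrow> real) \<Rightarrow> bool" where
  "Cn_on n h U \<longleftrightarrow>
     (\<forall>j<n. \<forall>t\<in>{0..h}. (U j has_real_derivative U (Suc j) t) (at t within {0..h}))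
     \<and> continuous_on {0..h} (U n)"

end

theory Submission
  imports Defs "HOL-Complex_Analysis.Great_Picard"
begin

text \<open>Put m = \<lceil>\<alpha>1\<rceil>, p = n - m and \<beta> = m - \<alpha>1. For w = u^(m) the problem becomes the
  Volterra equation w = P + J^p f(., J^\<beta> w), where P is the Taylor polynomial of the data
  u0^(m), ..., u0^(n-1); u is recovered from w by Taylor expansion and repeated integration.
  The choice of h makes the set of functions bounded by B = k + \<Sum> I^i/i! |u0^(i+m)| invariant,
  and on this set f(., J^\<beta> w) is bounded by M. Tonelli's delayed equations
  w = P + (J^p f(., J^\<beta> w))(. - \<delta>) are solved by finitely many iterations; their solutions
  are uniformly bounded and equicontinuous, so by Arzela-Ascoli a subsequence converges
  uniformly as \<delta> \<rightarrow> 0, and the limit solves the Volterra equation.\<close>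

fun iter_integral :: "nat \<Rightarrow> (real \<Rightarrow> real) \<Rightarrow> real \<Rightarrow> real" where
  "iter_integral 0 g = g"
| "iter_integral (Suc k) g = (\<lambda>t. integral {0..t} (iter_integral k g))"

lemma has_integral_power_over_fact:
  assumes "0 \<le> (t::real)"
  shows "((\<lambda>s. s ^ k / fact k) has_integral t ^ Suc k / fact (Suc k)) {0..t}"
proof -
  have "((\<lambda>s. s ^ Suc k / fact (Suc k)) has_real_derivative x ^ k / fact k) (at x within {0..t})"
    for x
  proof -
    have "real (Suc k) * x ^ k / fact (Suc k) = x ^ k / fact k"
      by (simp add: divide_simps del: of_nat_Suc)
    then show ?thesis
      using DERIV_cdivide[OF DERIV_pow[of "Suc k" x "{0..t}"], of "fact (Suc k)"] by simp
  qed
  then show ?thesis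
    using fundamental_theorem_of_calculus[OF assms, of "\<lambda>s. s ^ Suc k / fact (Suc k)"]
    by (simp add: has_real_derivative_iff_has_vector_derivative)
qed

lemma iter_integral_continuous_on:
  assumes "continuous_on {0..h} g"
  shows "continuous_on {0..h} (iter_integral k g)"
  by (induction k)
    (use assms in \<open>auto intro: indefinite_integral_continuous_1 integrable_continuous_interval\<close>)

lemma iter_integral_has_real_derivative:
  assumes "continuous_on {0..h} g" "t \<in> {0..h}"
  shows "(iter_integral (Suc k) g has_real_derivative iter_integral k g t) (at t within {0..h})"
  using integral_has_real_derivative[OF iter_integral_continuous_on[OF assms(1)] assms(2)] by simp

lemma iter_integral_integrable_on:
  assumes "continuous_on {0..h} g" "t \<le> h"
  shows "iter_integral k g integrable_on {0..t}"
  using assms iter_integral_continuous_on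
  by (meson atLeastatMost_subset_iff continuous_on_subset integrable_continuous_interval order_refl)

lemma iter_integral_cong:
  assumes "\<forall>s\<in>{0..t}. g s = g' s" "0 \<le> t"
  shows "iter_integral k g t = iter_integral k g' t"
  using assms
proof (induction k arbitrary: t)
  case (Suc k)
  then show ?case by (auto intro: integral_cong)
qed simp

lemma iter_integral_zero [simp]: "iter_integral k (\<lambda>_. 0) = (\<lambda>_. 0)"
  by (induction k) simp_all

lemma iter_integral_diff_bound:
  assumes g: "continuous_on {0..h} g" and g': "continuous_on {0..h} g'"
    and e: "\<forall>s\<in>{0..h}. \<bar>g s - g' s\<bar> \<le> e" and t: "t \<in> {0..h}"
  shows "\<bar>iter_integral k g t - iter_integral k g' t\<bar> \<le> e * t ^ k / fact k"
  using t
proof (induction k arbitrary: t)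
  case 0
  then show ?case using e by simp
next
  case (Suc k)
  have sub: "{0..t} \<subseteq> {0..h}" using Suc.prems by auto
  have int: "iter_integral k g integrable_on {0..t}" "iter_integral k g' integrable_on {0..t}"
    using iter_integral_integrable_on g g' Suc.prems by auto
  have majorant: "((\<lambda>s. e * (s ^ k / fact k)) has_integral e * (t ^ Suc k / fact (Suc k))) {0..t}"
    using has_integral_power_over_fact[of t k] Suc.prems by (intro has_integral_mult_right) auto
  have "norm (integral {0..t} (\<lambda>s. iter_integral k g s - iter_integral k g' s))
        \<le> integral {0..t} (\<lambda>s. e * (s ^ k / fact k))"
    using int majorant Suc.IH sub
    by (intro integral_norm_bound_integral integrable_diff) (auto simp: has_integral_integrable)
  also have "\<dots> = e * t ^ Suc k / fact (Suc k)"
    using integral_unique[OF majorant] by simp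
  finally show ?case
    by (simp add: integral_diff[OF int])
qed

lemma iter_integral_abs_le:
  assumes "continuous_on {0..h} g" "\<forall>s\<in>{0..h}. \<bar>g s\<bar> \<le> M" "t \<in> {0..h}"
  shows "\<bar>iter_integral k g t\<bar> \<le> M * h ^ k / fact k"
proof -
  have "\<bar>iter_integral k g t - iter_integral k (\<lambda>_. 0) t\<bar> \<le> M * t ^ k / fact k"
    by (rule iter_integral_diff_bound[of h]) (use assms in auto)
  moreover have "M * t ^ k / fact k \<le> M * h ^ k / fact k"
    using assms by (force intro!: divide_right_mono mult_left_mono power_mono)
  ultimately show ?thesis by simp
qed

lemma iter_integral_Suc_lipschitz:
  assumes g: "continuous_on {0..h} g" and M: "\<forall>s\<in>{0..h}. \<bar>g s\<bar> \<le> M"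
    and "s \<in> {0..h}" "t \<in> {0..h}"
  shows "\<bar>iter_integral (Suc k) g t - iter_integral (Suc k) g s\<bar> \<le> M * h ^ k / fact k * \<bar>t - s\<bar>"
proof -
  have ordered: "\<bar>iter_integral (Suc k) g b - iter_integral (Suc k) g a\<bar> \<le> M * h ^ k / fact k * (b - a)"
    if ab: "0 \<le> a" "a \<le> b" "b \<le> h" for a b
  proof -
    have int: "iter_integral k g integrable_on {0..b}"
      using iter_integral_integrable_on[OF g ab(3)] .
    have "iter_integral (Suc k) g b - iter_integral (Suc k) g a = integral {a..b} (iter_integral k g)"
      using Henstock_Kurzweil_Integration.integral_combine[OF ab(1,2) int] by simp
    moreover have "norm (integral {a..b} (iter_integral k g)) \<le> M * h ^ k / fact k * (b - a)"
    proof (rule integral_bound[OF ab(2)])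
      show "continuous_on {a..b} (iter_integral k g)"
        using ab by (intro continuous_on_subset[OF iter_integral_continuous_on[OF g]]) auto
      show "norm (iter_integral k g x) \<le> M * h ^ k / fact k" if "x \<in> {a..b}" for x
        using iter_integral_abs_le[OF g M] that ab by simp
    qed
    ultimately show ?thesis using ab by simp
  qed
  show ?thesis
    using ordered[of s t] ordered[of t s] assms(3,4)
    by (cases "s \<le> t") (auto simp: abs_minus_commute)
qed

lemma integral_Diff_singleton:
  fixes f :: "'a::euclidean_space \<Rightarrow> 'b::banach"
  shows "integral (S - {a}) f = integral S f"
  by (rule integral_spike_set) (auto intro: negligible_subset[OF negligible_sing])

lemma integrable_on_Diff_singleton_iff:
  fixes f :: "'a::euclidean_space \<Rightarrow> 'b::banach"
  shows "f integrable_on (S - {a}) \<longleftrightarrow> f integrable_on S"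
  by (rule integrable_spike_set_eq) (auto intro: negligible_subset[OF negligible_sing])

text \<open>The substitution \<open>r = t - s\<close> turns \<open>J\<^sup>\<beta> u t\<close> into \<open>powr_conv \<beta> u t / \<Gamma>(\<beta>)\<close>; in this
  form the singularity of the kernel sits at \<open>r = 0\<close> for every \<open>t\<close>.\<close>

definition powr_conv :: "real \<Rightarrow> (real \<Rightarrow> real) \<Rightarrow> real \<Rightarrow> real" where
  "powr_conv \<beta> u t = integral {0..t} (\<lambda>r. r powr (\<beta> - 1) * u (t - r))"

lemma powr_conv_integrable:
  fixes u :: "real \<Rightarrow> real"
  assumes b: "\<beta> > 0" and u: "continuous_on {0..h} u" and t: "t \<in> {0..h}"
  shows "(\<lambda>r. r powr (\<beta> - 1) * u (t - r)) integrable_on {0..t}"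
proof -
  have cu: "continuous_on {0..t} (\<lambda>r. u (t - r))"
    by (rule continuous_on_compose2[OF u]) (use t in \<open>auto intro!: continuous_intros\<close>)
  have "(\<lambda>r. u (t - r) * r powr (\<beta> - 1)) absolutely_integrable_on {0..t}"
  proof (rule absolutely_integrable_bounded_measurable_product_real)
    show "(\<lambda>r. u (t - r)) \<in> borel_measurable (lebesgue_on {0..t})"
      by (rule continuous_imp_measurable_on_sets_lebesgue[OF cu]) simp
    show "bounded ((\<lambda>r. u (t - r)) ` {0..t})"
      by (rule compact_imp_bounded, rule compact_continuous_image[OF cu]) simp
    show "(\<lambda>r. r powr (\<beta> - 1)) absolutely_integrable_on {0..t}"
      using integrable_on_powr_from_0[of "\<beta> - 1" t] b t
      by (intro nonnegative_absolutely_integrable_1) auto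
  qed simp
  then show ?thesis
    by (simp add: mult.commute absolutely_integrable_on_def)
qed

lemma RL_int_eq_powr_conv:
  assumes b: "\<beta> > 0" and u: "continuous_on {0..h} u" and t: "t \<in> {0..h}"
  shows "RL_int \<beta> u t = powr_conv \<beta> u t / Gamma \<beta>"
proof -
  have "((\<lambda>r. r powr (\<beta> - 1) * u (t - r)) has_integral powr_conv \<beta> u t) (cbox 0 t)"
    unfolding powr_conv_def using powr_conv_integrable[OF assms] by (simp add: integrable_integral)
  from has_integral_affinity[OF this, of "-1" t]
  have "((\<lambda>s. (t - s) powr (\<beta> - 1) * u s) has_integral powr_conv \<beta> u t) ((\<lambda>s. t - s) ` {0..t})"
    by simp
  moreover have "(\<lambda>s. t - s) ` {0..t} = {0..t}"
    by (auto simp: image_iff intro!: bexI[of _ "t - _"])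
  ultimately show ?thesis
    using b unfolding RL_int_def by (simp add: integral_unique)
qed

lemma powr_conv_abs_le:
  assumes b: "\<beta> > 0" and u: "continuous_on {0..h} u" and t: "t \<in> {0..h}"
    and e: "\<forall>s\<in>{0..t}. \<bar>u s\<bar> \<le> e"
  shows "\<bar>powr_conv \<beta> u t\<bar> \<le> e * (t powr \<beta> / \<beta>)"
proof -
  have majorant: "((\<lambda>r. e * r powr (\<beta> - 1)) has_integral e * (t powr \<beta> / \<beta>)) {0..t}"
    using has_integral_mult_right[OF has_integral_powr_from_0[of "\<beta> - 1" t], of e] b t by simp
  have "norm (powr_conv \<beta> u t) \<le> integral {0..t} (\<lambda>r. e * r powr (\<beta> - 1))"
    unfolding powr_conv_def
  proof (rule integral_norm_bound_integral)
    show "(\<lambda>r. r powr (\<beta> - 1) * u (t - r)) integrable_on {0..t}"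
      by (rule powr_conv_integrable[OF b u t])
    show "(\<lambda>r. e * r powr (\<beta> - 1)) integrable_on {0..t}"
      using majorant by (rule has_integral_integrable)
    show "norm (r powr (\<beta> - 1) * u (t - r)) \<le> e * r powr (\<beta> - 1)" if "r \<in> {0..t}" for r
      using e that by (auto simp: abs_mult mult.commute intro!: mult_right_mono)
  qed
  then show ?thesis
    using integral_unique[OF majorant] by simp
qed

lemma tendsto_if_atLeastAtMost:
  fixes g :: "real \<Rightarrow> real"
  assumes g: "isCont g a" and x: "x \<longlonglongrightarrow> a" and r: "r \<noteq> a"
  shows "(\<lambda>n. if r \<in> {0..x n} then g (x n) else 0) \<longlonglongrightarrow> (if r \<in> {0..a} then g a else 0)"
proof (cases "0 \<le> r \<and> r < a")
  case True
  then have "\<forall>\<^sub>F n in sequentially. g (x n) = (if r \<in> {0..x n} then g (x n) else 0)"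
    using order_tendstoD(1)[OF x, of r] by (auto elim: eventually_mono)
  with True show ?thesis
    by (auto intro: Lim_transform_eventually isCont_tendsto_compose[OF g x])
next
  case False
  have "\<forall>\<^sub>F n in sequentially. 0 = (if r \<in> {0..x n} then g (x n) else 0)"
  proof (cases "r < 0")
    case False
    with \<open>\<not> (0 \<le> r \<and> r < a)\<close> r have "a < r"
      by auto
    then show ?thesis
      using order_tendstoD(2)[OF x] by (fastforce elim: eventually_mono)
  qed simp
  moreover have "r \<notin> {0..a}"
    using False r by auto
  ultimately show ?thesis
    by (auto intro: Lim_transform_eventually[OF tendsto_const])
qed

lemma powr_conv_continuous_on_bounded:
  assumes b: "\<beta> > 0" and v: "continuous_on UNIV v" and vB: "\<And>x. \<bar>v x\<bar> \<le> C"
  shows "continuous_on {0..h} (powr_conv \<beta> v)"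
proof (rule continuous_on_sequentiallyI)
  fix x :: "nat \<Rightarrow> real" and a
  assume xS: "\<forall>n. x n \<in> {0..h}" and aS: "a \<in> {0..h}" and xa: "x \<longlonglongrightarrow> a"
  define F where "F t = (\<lambda>r. if r \<in> {0..t} then r powr (\<beta> - 1) * v (t - r) else 0)" for t
  \<comment> \<open>The point \<open>a\<close> is removed from the domain: \<open>F (x n) a\<close> need not converge to \<open>F a a\<close>.\<close>
  have v': "continuous_on {0..h} v"
    using v by (rule continuous_on_subset) simp
  have F: "F t integrable_on {0..h} - {a} \<and> integral ({0..h} - {a}) (F t) = powr_conv \<beta> v t"
    if t: "t \<in> {0..h}" for t
  proof -
    have Int: "{0..t} \<inter> {0..h} = {0..t}"
      using t by auto
    have "F t integrable_on {0..h}" "integral {0..h} (F t) = powr_conv \<beta> v t"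
      unfolding F_def integrable_restrict_Int Henstock_Kurzweil_Integration.integral_restrict_Int Int
      using powr_conv_integrable[OF b v' t] by (simp_all add: powr_conv_def)
    then show ?thesis
      by (simp add: integrable_on_Diff_singleton_iff integral_Diff_singleton)
  qed
  have "(\<lambda>n. integral ({0..h} - {a}) (F (x n))) \<longlonglongrightarrow> integral ({0..h} - {a}) (F a)"
  proof (rule dominated_convergence(2))
    show "F (x n) integrable_on {0..h} - {a}" for n
      using F xS by blast
    show "(\<lambda>r. C * r powr (\<beta> - 1)) integrable_on {0..h} - {a}"
      using integrable_on_cmult_left[OF integrable_on_powr_from_0[of "\<beta> - 1" h], of C] b aS
      by (simp add: integrable_on_Diff_singleton_iff)
    show "norm (F (x n) r) \<le> C * r powr (\<beta> - 1)" if "r \<in> {0..h} - {a}" for n r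
      using vB[of "x n - r"] that vB[of 0]
      by (auto simp: F_def abs_mult mult.commute[of C] intro!: mult_left_mono)
    show "(\<lambda>n. F (x n) r) \<longlonglongrightarrow> F a r" if "r \<in> {0..h} - {a}" for r
    proof -
      have "continuous_on UNIV (\<lambda>t. r powr (\<beta> - 1) * v (t - r))"
        by (intro continuous_intros continuous_on_compose2[OF v]) auto
      then show ?thesis
        using tendsto_if_atLeastAtMost[OF _ xa, of "\<lambda>t. r powr (\<beta> - 1) * v (t - r)" r] that
        by (simp add: F_def continuous_on_eq_continuous_at)
    qed
  qed
  then show "(\<lambda>n. powr_conv \<beta> v (x n)) \<longlonglongrightarrow> powr_conv \<beta> v a"
    using F xS aS by simp
qed

lemma powr_conv_continuous_on:
  assumes b: "\<beta> > 0" and u: "continuous_on {0..h} u"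
  shows "continuous_on {0..h} (powr_conv \<beta> u)"
proof (cases "0 \<le> h")
  case True
  define v where "v x = u (max 0 (min h x))" for x
  have v: "continuous_on UNIV v"
    unfolding v_def by (rule continuous_on_compose2[OF u]) (use True in \<open>auto intro!: continuous_intros\<close>)
  obtain C where "\<And>y. y \<in> u ` {0..h} \<Longrightarrow> norm y \<le> C"
    using compact_imp_bounded[OF compact_continuous_image[OF u compact_Icc]] bounded_iff by metis
  then have "\<bar>v x\<bar> \<le> C" for x
    using True unfolding v_def by auto
  note continuous = powr_conv_continuous_on_bounded[OF b v this]
  have "powr_conv \<beta> u t = powr_conv \<beta> v t" if "t \<in> {0..h}" for t
    unfolding powr_conv_def v_def using that by (intro integral_cong) auto
  then show ?thesis
    using continuous_on_eq[OF continuous] by auto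
qed simp

lemma RL_int_cong:
  assumes "\<forall>s\<in>{0..t}. u s = v s" "0 \<le> t"
  shows "RL_int \<beta> u t = RL_int \<beta> v t"
  using assms unfolding RL_int_def by (auto intro!: integral_cong)

lemma RL_int_continuous_on:
  assumes b: "\<beta> \<ge> 0" and u: "continuous_on {0..h} u"
  shows "continuous_on {0..h} (RL_int \<beta> u)"
proof (cases "\<beta> = 0")
  case True
  then show ?thesis using u by (simp add: RL_int_def)
next
  case False
  with b have "\<beta> > 0" by simp
  have "continuous_on {0..h} (\<lambda>t. powr_conv \<beta> u t / Gamma \<beta>)"
    using Gamma_real_pos[OF \<open>\<beta> > 0\<close>]
    by (intro continuous_intros powr_conv_continuous_on[OF \<open>\<beta> > 0\<close> u]) simp
  then show ?thesis
    by (rule continuous_on_eq) (use RL_int_eq_powr_conv[OF \<open>\<beta> > 0\<close> u] in auto)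
qed

lemma RL_int_diff:
  assumes b: "\<beta> \<ge> 0" and u: "continuous_on {0..h} u" and v: "continuous_on {0..h} v"
    and t: "t \<in> {0..h}"
  shows "RL_int \<beta> u t - RL_int \<beta> v t = RL_int \<beta> (\<lambda>s. u s - v s) t"
proof (cases "\<beta> = 0")
  case False
  with b have b': "\<beta> > 0" by simp
  have uv: "continuous_on {0..h} (\<lambda>s. u s - v s)"
    using u v by (intro continuous_intros)
  have "powr_conv \<beta> (\<lambda>s. u s - v s) t = powr_conv \<beta> u t - powr_conv \<beta> v t"
    unfolding powr_conv_def
    using integral_diff[OF powr_conv_integrable[OF b' u t] powr_conv_integrable[OF b' v t]]
    by (simp add: right_diff_distrib)
  then show ?thesis
    by (simp add: RL_int_eq_powr_conv[OF b' _ t] u v uv diff_divide_distrib)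
qed (simp add: RL_int_def)

text \<open>The bound is stated with some \<open>H > 0\<close> rather than \<open>t\<close> itself because of the junk
  value \<open>0 powr 0 = 0\<close>.\<close>

lemma RL_int_abs_le:
  assumes b: "\<beta> \<ge> 0" and u: "continuous_on {0..h} u" and t: "t \<in> {0..h}"
    and H: "0 < H" "t \<le> H" and e: "\<forall>s\<in>{0..t}. \<bar>u s\<bar> \<le> e"
  shows "\<bar>RL_int \<beta> u t\<bar> \<le> e * H powr \<beta> / Gamma (\<beta> + 1)"
proof (cases "\<beta> = 0")
  case True
  then show ?thesis using e t H by (simp add: RL_int_def)
next
  case False
  with b have b': "\<beta> > 0" by simp
  have e0: "0 \<le> e"
    using e t by force
  have "\<bar>RL_int \<beta> u t\<bar> = \<bar>powr_conv \<beta> u t\<bar> / Gamma \<beta>"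
    using RL_int_eq_powr_conv[OF b' u t] b' by simp
  also have "\<dots> \<le> e * (t powr \<beta> / \<beta>) / Gamma \<beta>"
    using b' by (intro divide_right_mono[OF powr_conv_abs_le[OF b' u t e]]) simp
  also have "\<dots> = e * t powr \<beta> / Gamma (\<beta> + 1)"
    using Gamma_plus1[of \<beta>] b' nonpos_Ints_nonpos[of \<beta>] by force
  also have "\<dots> \<le> e * H powr \<beta> / Gamma (\<beta> + 1)"
    using t H b' e0 by (intro divide_right_mono mult_left_mono powr_mono2) auto
  finally show ?thesis .
qed

locale volterra =
  fixes f :: "real \<Rightarrow> real \<Rightarrow> real" and P :: "real \<Rightarrow> real"
    and \<beta> h B M :: real and p :: nat
  assumes \<beta>_nonneg: "\<beta> \<ge> 0" and h_pos: "0 < h" and p_pos: "1 \<le> p" and M_nonneg: "0 \<le> M"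
    and P_continuous: "continuous_on {0..h} P"
    and f_continuous: "continuous_on ({0..h} \<times> UNIV) (\<lambda>(t, v). f t v)"
    and f_bound: "\<And>t v. t \<in> {0..h} \<Longrightarrow> \<bar>v\<bar> \<le> B * h powr \<beta> / Gamma (\<beta> + 1) \<Longrightarrow> \<bar>f t v\<bar> \<le> M"
    and P_bound: "\<And>t. t \<in> {0..h} \<Longrightarrow> \<bar>P t\<bar> + M * h ^ p / fact p \<le> B"
begin

definition nonlin :: "(real \<Rightarrow> real) \<Rightarrow> real \<Rightarrow> real" where
  "nonlin u s = f s (RL_int \<beta> u s)"

definition admissible :: "(real \<Rightarrow> real) \<Rightarrow> bool" where
  "admissible u \<longleftrightarrow> continuous_on {0..h} u \<and> (\<forall>t\<in>{0..h}. \<bar>u t\<bar> \<le> B)"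

definition tonelli :: "real \<Rightarrow> (real \<Rightarrow> real) \<Rightarrow> real \<Rightarrow> real" where
  "tonelli \<delta> u t = P t + iter_integral p (nonlin u) (max 0 (t - \<delta>))"

definition lip_const :: real where
  "lip_const = M * h ^ (p - 1) / fact (p - 1)"

lemma lip_const_nonneg: "0 \<le> lip_const"
  unfolding lip_const_def using M_nonneg h_pos by simp

lemma admissible_P: "admissible P"
proof -
  have "0 \<le> M * h ^ p / fact p"
    using M_nonneg h_pos by simp
  then show ?thesis
    unfolding admissible_def using P_continuous P_bound by force
qed

lemma nonlin_continuous_on:
  assumes "admissible u"
  shows "continuous_on {0..h} (nonlin u)"
proof -
  have "continuous_on {0..h} (RL_int \<beta> u)"
    using RL_int_continuous_on[OF \<beta>_nonneg] assms by (simp add: admissible_def)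
  then have "continuous_on {0..h} (\<lambda>s. (\<lambda>(t, v). f t v) (s, RL_int \<beta> u s))"
    by (intro continuous_on_compose2[OF f_continuous]) (auto intro!: continuous_intros)
  then show ?thesis
    unfolding nonlin_def[abs_def] by simp
qed

lemma abs_RL_int_le:
  assumes "admissible u" "s \<in> {0..h}"
  shows "\<bar>RL_int \<beta> u s\<bar> \<le> B * h powr \<beta> / Gamma (\<beta> + 1)"
  using assms h_pos by (intro RL_int_abs_le[OF \<beta>_nonneg]) (auto simp: admissible_def)

lemma abs_nonlin_le:
  assumes "admissible u" "s \<in> {0..h}"
  shows "\<bar>nonlin u s\<bar> \<le> M"
  unfolding nonlin_def using assms abs_RL_int_le by (intro f_bound)

lemma iter_integral_nonlin_lipschitz:
  assumes "admissible u" "s \<in> {0..h}" "t \<in> {0..h}"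
  shows "\<bar>iter_integral p (nonlin u) t - iter_integral p (nonlin u) s\<bar> \<le> lip_const * \<bar>t - s\<bar>"
proof -
  have "\<bar>iter_integral (Suc (p - 1)) (nonlin u) t - iter_integral (Suc (p - 1)) (nonlin u) s\<bar>
        \<le> lip_const * \<bar>t - s\<bar>"
    unfolding lip_const_def using abs_nonlin_le[OF assms(1)]
    by (intro iter_integral_Suc_lipschitz[OF nonlin_continuous_on[OF assms(1)] _ assms(2,3)]) auto
  then show ?thesis
    using p_pos by simp
qed

lemma admissible_tonelli:
  assumes u: "admissible u" and \<delta>: "0 \<le> \<delta>"
  shows "admissible (tonelli \<delta> u)"
  unfolding admissible_def
proof (intro conjI ballI)
  have "continuous_on {0..h} (\<lambda>t. iter_integral p (nonlin u) (max 0 (t - \<delta>)))"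
    using \<delta> h_pos
    by (intro continuous_on_compose2[OF iter_integral_continuous_on[OF nonlin_continuous_on[OF u]]])
      (auto intro!: continuous_intros)
  then show "continuous_on {0..h} (tonelli \<delta> u)"
    unfolding tonelli_def[abs_def] using P_continuous by (intro continuous_intros)
  show "\<bar>tonelli \<delta> u t\<bar> \<le> B" if t: "t \<in> {0..h}" for t
  proof -
    have "\<bar>iter_integral p (nonlin u) (max 0 (t - \<delta>))\<bar> \<le> M * h ^ p / fact p"
      using t \<delta> abs_nonlin_le[OF u]
      by (intro iter_integral_abs_le[OF nonlin_continuous_on[OF u]]) auto
    then show ?thesis
      using P_bound[OF t] unfolding tonelli_def by linarith
  qed
qed

lemma tonelli_cong:
  assumes "\<forall>s\<in>{0..a}. u s = v s" "0 \<le> a" "t \<le> a + \<delta>"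
  shows "tonelli \<delta> u t = tonelli \<delta> v t"
proof -
  have "nonlin u s = nonlin v s" if "s \<in> {0..max 0 (t - \<delta>)}" for s
    using assms that unfolding nonlin_def by (subst RL_int_cong[of s u v]) auto
  then show ?thesis
    unfolding tonelli_def by (subst iter_integral_cong) auto
qed

lemma tonelli_lipschitz:
  assumes "admissible u" "0 \<le> \<delta>" "s \<in> {0..h}" "t \<in> {0..h}"
  shows "\<bar>tonelli \<delta> u t - tonelli \<delta> u s\<bar> \<le> \<bar>P t - P s\<bar> + lip_const * \<bar>t - s\<bar>"
proof -
  have "\<bar>iter_integral p (nonlin u) (max 0 (t - \<delta>)) - iter_integral p (nonlin u) (max 0 (s - \<delta>))\<bar>
        \<le> lip_const * \<bar>max 0 (t - \<delta>) - max 0 (s - \<delta>)\<bar>"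
    using assms by (intro iter_integral_nonlin_lipschitz) auto
  also have "\<dots> \<le> lip_const * \<bar>t - s\<bar>"
    using lip_const_nonneg by (intro mult_left_mono) auto
  finally show ?thesis
    unfolding tonelli_def by linarith
qed

text \<open>Starting from \<open>P\<close>, the \<open>j\<close>-th and \<open>(j+1)\<close>-st iterates agree on \<open>[0, j\<delta>]\<close>, so
  iterating until \<open>j\<delta> \<ge> h\<close> gives a fixed point.\<close>

lemma tonelli_fixed_point_exists:
  assumes \<delta>: "0 < \<delta>"
  shows "\<exists>w. admissible w \<and> (\<forall>t\<in>{0..h}. w t = tonelli \<delta> w t)"
proof -
  define W where "W j = (tonelli \<delta> ^^ j) P" for j
  have W_Suc: "W (Suc j) = tonelli \<delta> (W j)" for j
    by (simp add: W_def)
  have W_admissible: "admissible (W j)" for j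
    by (induction j) (use admissible_P admissible_tonelli \<delta> in \<open>auto simp: W_def\<close>)
  have stable: "\<forall>t\<in>{0..real j * \<delta>}. W (Suc j) t = W j t" for j
  proof (induction j)
    case 0
    have "iter_integral (Suc (p - 1)) (nonlin P) 0 = 0"
      by simp
    then have "W (Suc 0) 0 = W 0 0"
      using p_pos \<delta> by (simp add: W_def tonelli_def)
    then show ?case by auto
  next
    case (Suc j)
    show ?case
      using tonelli_cong[of "real j * \<delta>" "W (Suc j)" "W j"] Suc.IH \<delta>
      by (auto simp: W_Suc algebra_simps)
  qed
  obtain N :: nat where "h \<le> real N * \<delta>"
    using real_arch_simple[of "h / \<delta>"] \<delta> by (auto simp: field_simps)
  then have "W N t = tonelli \<delta> (W N) t" if "t \<in> {0..h}" for t
    using stable[of N] that by (auto simp: W_Suc)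
  with W_admissible show ?thesis by blast
qed

lemma tonelli_fixed_points_equicontinuous:
  assumes w: "\<And>n. admissible (w n)" "\<And>n t. t \<in> {0..h} \<Longrightarrow> w n t = tonelli (\<delta> n) (w n) t"
    and \<delta>: "\<And>n. 0 \<le> \<delta> n" and x: "x \<in> {0..h}" and e: "0 < e"
  shows "\<exists>d>0. \<forall>n y. y \<in> {0..h} \<and> norm (x - y) < d \<longrightarrow> norm (w n x - w n y) < e"
proof -
  obtain d\<^sub>P where d\<^sub>P: "d\<^sub>P > 0" "\<And>y. y \<in> {0..h} \<Longrightarrow> \<bar>y - x\<bar> < d\<^sub>P \<Longrightarrow> \<bar>P y - P x\<bar> < e / 2"
    using P_continuous x e unfolding continuous_on_iff dist_real_def by (metis half_gt_zero)
  define d where "d = min d\<^sub>P (e / (2 * (lip_const + 1)))"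
  have "\<bar>w n x - w n y\<bar> < e" if y: "y \<in> {0..h}" "\<bar>x - y\<bar> < d" for n y
  proof -
    have "lip_const * \<bar>x - y\<bar> \<le> lip_const * (e / (2 * (lip_const + 1)))"
      using y lip_const_nonneg unfolding d_def by (intro mult_left_mono) auto
    also have "\<dots> \<le> e / 2"
      using lip_const_nonneg e by (simp add: field_simps)
    finally have "lip_const * \<bar>x - y\<bar> \<le> e / 2" .
    moreover have "\<bar>P x - P y\<bar> < e / 2"
      using d\<^sub>P(2)[of y] y unfolding d_def by (simp add: abs_minus_commute)
    ultimately show ?thesis
      using tonelli_lipschitz[OF w(1)[of n] \<delta>[of n] y(1) x] w(2)[OF x, of n] w(2)[OF y(1), of n] by linarith
  qed
  moreover have "d > 0"
    unfolding d_def using d\<^sub>P e lip_const_nonneg by simp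
  ultimately show ?thesis
    by auto
qed

lemma tonelli_fixed_points_uniform_limit:
  assumes w: "\<And>n. admissible (w n)" "\<And>n t. t \<in> {0..h} \<Longrightarrow> w n t = tonelli (\<delta> n) (w n) t"
    and \<delta>: "\<And>n. 0 \<le> \<delta> n"
  obtains z r where "admissible z" "strict_mono (r :: nat \<Rightarrow> nat)"
    "uniform_limit {0..h} (\<lambda>n. w (r n)) z sequentially"
proof -
  obtain z r where z: "continuous_on {0..h} z" and r: "strict_mono (r :: nat \<Rightarrow> nat)"
    and conv: "\<And>e. 0 < e \<Longrightarrow> \<exists>N. \<forall>n x. n \<ge> N \<and> x \<in> {0..h} \<longrightarrow> norm (w (r n) x - z x) < e"
  proof (rule Arzela_Ascoli[of "{0..h}" w B])
    show "norm (w n x) \<le> B" if "x \<in> {0..h}" for n x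
      using w(1)[of n] that by (simp add: admissible_def)
    show "\<exists>d>0. \<forall>n y. y \<in> {0..h} \<and> norm (x - y) < d \<longrightarrow> norm (w n x - w n y) < e"
      if "x \<in> {0..h}" "0 < e" for x e
      by (rule tonelli_fixed_points_equicontinuous[OF w \<delta> that])
  qed auto
  have lim: "uniform_limit {0..h} (\<lambda>n. w (r n)) z sequentially"
    using conv unfolding uniform_limit_sequentially_iff dist_norm by blast
  have "\<bar>z t\<bar> \<le> B" if "t \<in> {0..h}" for t
    using w(1) that
    by (intro tendsto_upperbound[OF tendsto_rabs[OF tendsto_uniform_limitI[OF lim that]]])
      (auto simp: admissible_def)
  with z have "admissible z"
    by (simp add: admissible_def)
  then show ?thesis
    using r lim by (rule that)
qed

lemma nonlin_uniformly_continuous: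
  assumes e: "0 < e"
  obtains \<eta> where "0 < \<eta>"
    "\<And>u v s. admissible u \<Longrightarrow> admissible v \<Longrightarrow> \<forall>x\<in>{0..h}. \<bar>u x - v x\<bar> \<le> \<eta> \<Longrightarrow> s \<in> {0..h}
      \<Longrightarrow> \<bar>nonlin u s - nonlin v s\<bar> < e"
proof -
  define R where "R = B * h powr \<beta> / Gamma (\<beta> + 1)"
  define K where "K = {0..h} \<times> {-R..R}"
  have "uniformly_continuous_on K (\<lambda>(t, v). f t v)"
    unfolding K_def
    by (intro compact_uniformly_continuous continuous_on_subset[OF f_continuous]
        compact_Times compact_Icc) auto
  then obtain d where d: "d > 0"
    and dK: "\<And>x x'. x \<in> K \<Longrightarrow> x' \<in> K \<Longrightarrow> dist x' x < d
      \<Longrightarrow> dist ((\<lambda>(t, v). f t v) x') ((\<lambda>(t, v). f t v) x) < e"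
    using e unfolding uniformly_continuous_on_def by metis
  define C where "C = h powr \<beta> / Gamma (\<beta> + 1)"
  have C: "0 \<le> C"
    unfolding C_def using \<beta>_nonneg by (simp add: Gamma_real_pos)
  show ?thesis
  proof
    show "0 < d / (C + 1)"
      using d C by simp
    fix u v s
    assume u: "admissible u" and v: "admissible v"
      and uv: "\<forall>x\<in>{0..h}. \<bar>u x - v x\<bar> \<le> d / (C + 1)" and s: "s \<in> {0..h}"
    have "\<bar>RL_int \<beta> u s - RL_int \<beta> v s\<bar> = \<bar>RL_int \<beta> (\<lambda>x. u x - v x) s\<bar>"
      using RL_int_diff[OF \<beta>_nonneg _ _ s] u v by (simp add: admissible_def)
    also have "\<dots> \<le> d / (C + 1) * h powr \<beta> / Gamma (\<beta> + 1)"
      using u v uv s h_pos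
      by (intro RL_int_abs_le[OF \<beta>_nonneg _ s]) (auto simp: admissible_def intro!: continuous_intros)
    also have "\<dots> = d / (C + 1) * C"
      by (simp add: C_def)
    also have "\<dots> < d"
      using d C by (simp add: field_simps)
    finally have "dist (s, RL_int \<beta> u s) (s, RL_int \<beta> v s) < d"
      by (simp add: dist_Pair_Pair dist_real_def)
    moreover have "(s, RL_int \<beta> u s) \<in> K" "(s, RL_int \<beta> v s) \<in> K"
      using abs_RL_int_le[OF u s] abs_RL_int_le[OF v s] s unfolding K_def R_def by auto
    ultimately show "\<bar>nonlin u s - nonlin v s\<bar> < e"
      using dK unfolding nonlin_def dist_real_def by fastforce
  qed
qed

lemma iter_integral_nonlin_tendsto:
  assumes w: "\<And>n. admissible (w n)" and z: "admissible z"
    and lim: "uniform_limit {0..h} w z sequentially" and t: "t \<in> {0..h}"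
  shows "(\<lambda>n. iter_integral p (nonlin (w n)) t) \<longlonglongrightarrow> iter_integral p (nonlin z) t"
proof (rule LIMSEQ_I)
  fix e :: real
  assume "0 < e"
  define c where "c = h ^ p / fact p + 1"
  have c: "1 \<le> c"
    unfolding c_def using h_pos by simp
  obtain \<eta> where \<eta>: "0 < \<eta>" and close: "\<And>u v s. admissible u \<Longrightarrow> admissible v
      \<Longrightarrow> \<forall>x\<in>{0..h}. \<bar>u x - v x\<bar> \<le> \<eta> \<Longrightarrow> s \<in> {0..h} \<Longrightarrow> \<bar>nonlin u s - nonlin v s\<bar> < e / c"
    using nonlin_uniformly_continuous[of "e / c"] \<open>0 < e\<close> c by auto
  obtain N where N: "\<And>n x. n \<ge> N \<Longrightarrow> x \<in> {0..h} \<Longrightarrow> \<bar>w n x - z x\<bar> < \<eta>"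
    using lim \<eta> unfolding uniform_limit_sequentially_iff dist_real_def by blast
  have "norm (iter_integral p (nonlin (w n)) t - iter_integral p (nonlin z) t) < e" if "n \<ge> N" for n
  proof -
    have "\<forall>x\<in>{0..h}. \<bar>w n x - z x\<bar> \<le> \<eta>"
      using N[OF that] by (auto intro: less_imp_le)
    then have "\<forall>s\<in>{0..h}. \<bar>nonlin (w n) s - nonlin z s\<bar> \<le> e / c"
      using close[OF w z] by (auto intro: less_imp_le)
    then have "\<bar>iter_integral p (nonlin (w n)) t - iter_integral p (nonlin z) t\<bar> \<le> e / c * t ^ p / fact p"
      using t
      by (intro iter_integral_diff_bound[OF nonlin_continuous_on[OF w] nonlin_continuous_on[OF z]])
    also have "\<dots> \<le> e / c * (c - 1)"
      using \<open>0 < e\<close> c t by (auto simp: c_def intro!: mult_left_mono divide_right_mono power_mono)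
    also have "\<dots> < e"
      using \<open>0 < e\<close> c by (simp add: field_simps)
    finally show ?thesis by simp
  qed
  then show "\<exists>N. \<forall>n\<ge>N. norm (iter_integral p (nonlin (w n)) t - iter_integral p (nonlin z) t) < e"
    by blast
qed

lemma solution_exists:
  obtains w where "admissible w" "\<And>t. t \<in> {0..h} \<Longrightarrow> w t = P t + iter_integral p (nonlin w) t"
proof -
  define \<delta> where "\<delta> n = h / real (Suc n)" for n
  have \<delta>_pos: "0 < \<delta> n" for n
    using h_pos by (simp add: \<delta>_def)
  then have \<delta>_nonneg: "0 \<le> \<delta> n" for n
    by (simp add: less_imp_le)
  have "\<exists>w. admissible w \<and> (\<forall>t\<in>{0..h}. w t = tonelli (\<delta> n) w t)" for n
    using tonelli_fixed_point_exists[OF \<delta>_pos] .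
  then obtain w where w: "\<And>n. admissible (w n)"
    and w_fixed: "\<And>n t. t \<in> {0..h} \<Longrightarrow> w n t = tonelli (\<delta> n) (w n) t"
    by metis
  obtain z r where z_admissible: "admissible z" and r: "strict_mono r"
    and lim: "uniform_limit {0..h} (\<lambda>n. w (r n)) z sequentially"
    by (rule tonelli_fixed_points_uniform_limit[OF w w_fixed \<delta>_nonneg])
  have pointwise: "(\<lambda>n. w (r n) t) \<longlonglongrightarrow> z t" if "t \<in> {0..h}" for t
    using tendsto_uniform_limitI[OF lim that] .
  have "(\<lambda>n. \<delta> (r n)) \<longlonglongrightarrow> 0"
    using LIMSEQ_subseq_LIMSEQ[OF tendsto_mult_right_zero[OF LIMSEQ_inverse_real_of_nat] r, of h]
    by (simp add: \<delta>_def o_def field_simps)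
  show ?thesis
  proof (rule that[OF z_admissible])
    fix t assume t: "t \<in> {0..h}"
    let ?J = "\<lambda>n x. iter_integral p (nonlin (w (r n))) x"
    have "(\<lambda>n. ?J n (max 0 (t - \<delta> (r n))) - ?J n t) \<longlonglongrightarrow> 0"
    proof (rule Lim_null_comparison)
      show "\<forall>\<^sub>F n in sequentially. norm (?J n (max 0 (t - \<delta> (r n))) - ?J n t) \<le> lip_const * \<delta> (r n)"
      proof (intro always_eventually allI)
        fix n
        show "norm (?J n (max 0 (t - \<delta> (r n))) - ?J n t) \<le> lip_const * \<delta> (r n)"
          using iter_integral_nonlin_lipschitz[OF w t, of "max 0 (t - \<delta> (r n))" "r n"] t
            lip_const_nonneg \<delta>_nonneg[of "r n"] by (auto intro: order_trans[OF _ mult_left_mono])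
      qed
      show "(\<lambda>n. lip_const * \<delta> (r n)) \<longlonglongrightarrow> 0"
        using tendsto_mult_right_zero[OF \<open>(\<lambda>n. \<delta> (r n)) \<longlonglongrightarrow> 0\<close>] .
    qed
    then have "(\<lambda>n. P t + (?J n t + (?J n (max 0 (t - \<delta> (r n))) - ?J n t)))
        \<longlonglongrightarrow> P t + (iter_integral p (nonlin z) t + 0)"
      using iter_integral_nonlin_tendsto[OF w z_admissible lim t] by (intro tendsto_intros)
    moreover have "w (r n) t = P t + (?J n t + (?J n (max 0 (t - \<delta> (r n))) - ?J n t))" for n
      using w_fixed[OF t] by (simp add: tonelli_def)
    ultimately show "z t = P t + iter_integral p (nonlin z) t"
      using LIMSEQ_unique[OF pointwise[OF t]] by simp
  qed
qed

end

lemma has_real_derivative_taylor_sum: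
  "((\<lambda>t. \<Sum>i<Suc q. c i * t ^ i / fact i) has_real_derivative (\<Sum>i<q. c (Suc i) * x ^ i / fact i))
     (at x within S)"
proof (induction q)
  case (Suc q)
  have "real (Suc q) * x ^ q / fact (Suc q) = x ^ q / fact q"
    by (simp add: divide_simps del: of_nat_Suc)
  then have "((\<lambda>t. c (Suc q) * t ^ Suc q / fact (Suc q)) has_real_derivative c (Suc q) * x ^ q / fact q)
      (at x within S)"
    using DERIV_cmult[OF DERIV_pow[of "Suc q" x S], of "c (Suc q)"]
      DERIV_cdivide[where D = "c (Suc q) * (real (Suc q) * x ^ q)" and c = "fact (Suc q)"]
    by (simp add: mult.assoc)
  from DERIV_add[OF Suc.IH this] show ?case
    by simp
qed simp

lemma Cn_on_taylor_plus_iter_integral: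
  fixes c :: "nat \<Rightarrow> real" and n :: nat
  assumes g: "continuous_on {0..h} g"
  obtains U where "Cn_on n h U" "\<And>i. i < n \<Longrightarrow> U i 0 = c i" "\<And>t. U n t = g t"
    "\<And>j t. j \<le> n \<Longrightarrow> U j t = (\<Sum>i<n - j. c (j + i) * t ^ i / fact i) + iter_integral (n - j) g t"
proof -
  define U where "U j t = (if j \<le> n
      then (\<Sum>i<n - j. c (j + i) * t ^ i / fact i) + iter_integral (n - j) g t else 0)" for j t
  have "Cn_on n h U"
    unfolding Cn_on_def
  proof (intro conjI allI impI ballI)
    fix j t
    assume j: "j < n" and t: "t \<in> {0..h}"
    define q where "q = n - Suc j"
    have q: "n - j = Suc q"
      using j by (simp add: q_def)
    have "U j = (\<lambda>t. (\<Sum>i<Suc q. c (j + i) * t ^ i / fact i) + iter_integral (Suc q) g t)"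
      using j by (simp add: U_def q fun_eq_iff)
    then have "(U j has_real_derivative (\<Sum>i<q. c (j + Suc i) * t ^ i / fact i) + iter_integral q g t)
        (at t within {0..h})"
      by (simp only:) (intro DERIV_add has_real_derivative_taylor_sum[where c = "\<lambda>i. c (j + i)"]
          iter_integral_has_real_derivative[OF g t])
    then show "(U j has_real_derivative U (Suc j) t) (at t within {0..h})"
      using j by (simp add: U_def q_def)
  next
    show "continuous_on {0..h} (U n)"
      using g by (simp add: U_def[abs_def])
  qed
  moreover have "U i 0 = c i" if "i < n" for i
  proof -
    define q where "q = n - Suc i"
    have "n - i = Suc q"
      using that by (simp add: q_def)
    then show ?thesis
      using that by (simp add: U_def sum.lessThan_Suc_shift)
  qed
  ultimately show ?thesis
    by (rule that) (simp_all add: U_def)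
qed

lemma abs_taylor_sum_le:
  fixes t I :: real
  assumes "0 \<le> t" "t \<le> I"
  shows "\<bar>\<Sum>i<p. c i * t ^ i / fact i\<bar> \<le> (\<Sum>i<p. I ^ i / fact i * \<bar>c i\<bar>)"
proof -
  have "\<bar>\<Sum>i<p. c i * t ^ i / fact i\<bar> \<le> (\<Sum>i<p. \<bar>c i\<bar> * t ^ i / fact i)"
    using sum_abs[of "\<lambda>i. c i * t ^ i / fact i"] assms by (simp add: abs_mult)
  also have "\<dots> \<le> (\<Sum>i<p. I ^ i / fact i * \<bar>c i\<bar>)"
    using assms by (intro sum_mono) (auto intro!: divide_right_mono mult_left_mono power_mono
        simp: mult.commute)
  finally show ?thesis .
qed

lemma step_size_bound:
  fixes k I M :: real
  assumes k: "0 < k" and I: "0 < I" and M: "0 \<le> M" and p: "1 \<le> p"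
  defines "h \<equiv> if M = 0 then I else min I ((k * fact p / M) powr (1 / real p))"
  shows "0 < h" "h \<le> I" "M * h ^ p / fact p \<le> k"
proof -
  show "0 < h" "h \<le> I"
    using k I M by (auto simp: h_def)
  show "M * h ^ p / fact p \<le> k"
  proof (cases "M = 0")
    case False
    then have M: "0 < M"
      using M by simp
    have "h ^ p \<le> ((k * fact p / M) powr (1 / real p)) ^ p"
      using \<open>0 < h\<close> False by (intro power_mono) (auto simp: h_def)
    also have "\<dots> = k * fact p / M"
      using k M p by (simp add: powr_realpow[symmetric] powr_powr)
    finally show ?thesis
      using M by (simp add: field_simps)
  qed (use k in simp)
qed

lemma le_Sup_image_compact:
  fixes F :: "'a::topological_space \<Rightarrow> real"
  assumes "compact S" "continuous_on S F" "x \<in> S"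
  shows "F x \<le> Sup (F ` S)"
  using assms
  by (metis bounded_imp_bdd_above cSup_upper compact_continuous_image compact_imp_bounded imageI)

lemma (in volterra) caputo_solution_exists:
  fixes \<alpha> :: real and c :: "nat \<Rightarrow> real"
  assumes \<alpha>: "0 \<le> \<alpha>" and \<beta>: "\<beta> = of_int \<lceil>\<alpha>\<rceil> - \<alpha>"
    and P: "\<And>t. P t = (\<Sum>i<p. c (i + nat \<lceil>\<alpha>\<rceil>) * t ^ i / fact i)"
  defines "n \<equiv> nat \<lceil>\<alpha>\<rceil> + p"
  shows "\<exists>U. Cn_on n h U \<and> (\<forall>i<n. U i 0 = c i)
    \<and> (\<forall>t\<in>{0..h}. caputo (real n) U t = f t (caputo \<alpha> U t))"
proof -
  define m where "m = nat \<lceil>\<alpha>\<rceil>"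
  obtain w where w: "admissible w"
    and w_eq: "\<And>t. t \<in> {0..h} \<Longrightarrow> w t = P t + iter_integral p (nonlin w) t"
    using solution_exists by blast
  obtain U where U: "Cn_on n h U" "\<And>i. i < n \<Longrightarrow> U i 0 = c i" "\<And>t. U n t = nonlin w t"
    "\<And>j t. j \<le> n \<Longrightarrow> U j t
      = (\<Sum>i<n - j. c (j + i) * t ^ i / fact i) + iter_integral (n - j) (nonlin w) t"
    using Cn_on_taylor_plus_iter_integral[OF nonlin_continuous_on[OF w]] by blast
  have "U m t = w t" if "t \<in> {0..h}" for t
    using w_eq[OF that] U(4)[of m t] by (simp add: P m_def n_def add.commute)
  then have "caputo \<alpha> U t = RL_int \<beta> w t" if "t \<in> {0..h}" for t
    using that RL_int_cong[of t "U m" w \<beta>] \<alpha> by (simp add: caputo_def \<beta> m_def)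
  moreover have "caputo (real n) U t = nonlin w t" for t
    using U(3) by (simp add: caputo_def RL_int_def)
  ultimately show ?thesis
    using U(1,2) by (auto simp: nonlin_def)
qed

lemma volterra_of_data:
  fixes f :: "real \<Rightarrow> real \<Rightarrow> real" and c :: "nat \<Rightarrow> real" and k I \<beta> :: real and p :: nat
  assumes k: "0 < k" and I: "0 < I" and \<beta>: "0 \<le> \<beta>" and p: "1 \<le> p"
    and f: "continuous_on ({0..I} \<times> UNIV) (\<lambda>(t, v). f t v)"
  defines "B \<equiv> k + (\<Sum>i<p. I ^ i / fact i * \<bar>c i\<bar>)"
  defines "M \<equiv> Sup ((\<lambda>(t, v). \<bar>f t v\<bar>) `
    {(t, v). t \<in> {0..I} \<and> \<bar>v\<bar> \<le> I powr \<beta> / Gamma (\<beta> + 1) * B})"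
  defines "h \<equiv> if M = 0 then I else min I ((k * fact p / M) powr (1 / real p))"
  shows "volterra f (\<lambda>t. \<Sum>i<p. c i * t ^ i / fact i) \<beta> h B M p"
proof -
  define R where "R = I powr \<beta> / Gamma (\<beta> + 1) * B"
  have B: "0 \<le> B"
    using k I by (simp add: B_def sum_nonneg)
  have G: "{(t, v). t \<in> {0..I} \<and> \<bar>v\<bar> \<le> R} = {0..I} \<times> {-R..R}"
    by (auto simp: abs_le_iff)
  have M_eq: "M = Sup ((\<lambda>(t, v). \<bar>f t v\<bar>) ` ({0..I} \<times> {-R..R}))"
    by (simp only: M_def G[unfolded R_def] R_def)
  have f_le_M: "\<bar>f t v\<bar> \<le> M" if "(t, v) \<in> {0..I} \<times> {-R..R}" for t v
  proof -
    have "continuous_on ({0..I} \<times> {-R..R}) (\<lambda>x. \<bar>(\<lambda>(t, v). f t v) x\<bar>)"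
      by (intro continuous_on_rabs continuous_on_subset[OF f]) auto
    then show ?thesis
      using le_Sup_image_compact[of "{0..I} \<times> {-R..R}" "\<lambda>(t, v). \<bar>f t v\<bar>" "(t, v)"] that
      by (simp add: M_eq compact_Times case_prod_unfold)
  qed
  have M: "0 \<le> M"
    using f_le_M[of 0 0] B I \<beta> by (simp add: R_def)
  have h: "0 < h" "h \<le> I" "M * h ^ p / fact p \<le> k"
    unfolding h_def by (fact step_size_bound[OF k I M p])+
  show ?thesis
  proof
    show "continuous_on ({0..h} \<times> UNIV) (\<lambda>(t, v). f t v)"
      using h by (auto intro: continuous_on_subset[OF f])
    show "\<bar>f t v\<bar> \<le> M" if "t \<in> {0..h}" "\<bar>v\<bar> \<le> B * h powr \<beta> / Gamma (\<beta> + 1)" for t v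
    proof (rule f_le_M)
      have "B * h powr \<beta> / Gamma (\<beta> + 1) \<le> R"
        unfolding R_def using B \<beta> h by (auto intro!: divide_right_mono mult_left_mono powr_mono2
            simp: mult.commute)
      then show "(t, v) \<in> {0..I} \<times> {-R..R}"
        using that h by auto
    qed
    show "\<bar>\<Sum>i<p. c i * t ^ i / fact i\<bar> + M * h ^ p / fact p \<le> B" if "t \<in> {0..h}" for t
      using abs_taylor_sum_le[of t I c p] that h by (simp add: B_def)
  qed (use \<beta> h p M in \<open>auto intro!: continuous_intros\<close>)
qed

theorem theorem3p3:
  fixes k I \<alpha>1 :: real and n :: nat and u0 :: "nat \<Rightarrow> real"
    and f :: "real \<Rightarrow> real \<Rightarrow> real"
  assumes k_pos: "k > 0" and I_pos: "I > 0"
    and a1_nonneg: "\<alpha>1 \<ge> 0"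
    and a1_not_nat: "\<forall>j::nat. j \<ge> 1 \<longrightarrow> \<alpha>1 \<noteq> real j"
    and a2_gt: "real n > \<alpha>1"
    and ceil_le: "\<lceil>\<alpha>1\<rceil> + 1 \<le> int n"
    and f_cont: "continuous_on ({0..I} \<times> UNIV) (\<lambda>(t, v). f t v)"
  defines "m \<equiv> nat \<lceil>\<alpha>1\<rceil>"
  defines "G \<equiv> {(t, v). t \<in> {0..I} \<and>
              \<bar>v\<bar> \<le> I powr (real m - \<alpha>1) / Gamma (real m - \<alpha>1 + 1) *
                     (k + (\<Sum>i = 0..n - m - 1. I ^ i / fact i * \<bar>u0 (i + m)\<bar>))}"
  defines "M \<equiv> Sup ((\<lambda>(t, v). \<bar>f t v\<bar>) ` G)"
  defines "h \<equiv> (if M = 0 then I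
               else min I ((k * Gamma (real n - real m + 1) / M) powr (1 / (real n - real m))))"
  shows "\<exists>U. Cn_on n h U
             \<and> (\<forall>i<n. U i 0 = u0 i)
             \<and> (\<forall>t\<in>{0..h}. caputo (real n) U t = f t (caputo \<alpha>1 U t))"
proof -
  define p where "p = n - m"
  define \<beta> where "\<beta> = real m - \<alpha>1"
  define B where "B = k + (\<Sum>i<p. I ^ i / fact i * \<bar>u0 (i + m)\<bar>)"
  have ceil: "0 \<le> \<lceil>\<alpha>1\<rceil>"
    using a1_nonneg by simp
  then have "m + 1 \<le> n"
    using ceil_le unfolding m_def by linarith
  then have n: "n = m + p" and p: "1 \<le> p" and \<beta>: "0 \<le> \<beta>" "\<beta> = of_int \<lceil>\<alpha>1\<rceil> - \<alpha>1"
    using ceil by (auto simp: m_def p_def \<beta>_def)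
  have "{0..n - m - 1} = {..<p}"
    using p by (auto simp: p_def)
  then have "M = Sup ((\<lambda>(t, v). \<bar>f t v\<bar>) `
      {(t, v). t \<in> {0..I} \<and> \<bar>v\<bar> \<le> I powr \<beta> / Gamma (\<beta> + 1) * B})"
    by (simp add: M_def G_def B_def \<beta>_def)
  moreover have "Gamma (real n - real m + 1) = fact p"
    using Gamma_fact[of p] by (simp add: n add.commute)
  then have "h = (if M = 0 then I else min I ((k * fact p / M) powr (1 / real p)))"
    by (simp add: h_def n)
  ultimately interpret volterra f "\<lambda>t. \<Sum>i<p. u0 (i + m) * t ^ i / fact i" \<beta> h B M p
    unfolding B_def by (simp only:) (rule volterra_of_data[OF k_pos I_pos \<beta>(1) p f_cont])
  show ?thesis
    using caputo_solution_exists[OF a1_nonneg \<beta>(2), of "u0"] by (simp add: n m_def)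
qed

end
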